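(* Let $d,e,n$ be positive integers with $n>1$, $\gcd(e,n)=1$, and $d\cdot e\equiv 1 \pmod{\lambda(n)}$. Then $\omega_e(\omega_e(n))>0$, and $$d\equiv e^{\,\omega_e(\omega_e(n))-1} \pmod{\omega_e(n)}.$$
   Context: For integers $m$ and $N\ge 1$, define $\omega_m(N)=\min\{k\in\mathbb{N}: k>0,\ m^k\equiv 1\pmod N\}$ (the multiplicative order of $m$ modulo $N$) if $\gcd(m,N)=1$, and $\omega_m(N)=0$ if $\gcd(m,N)\ne 1$. The Carmichael function $\lambda$ is defined as follows: if $n=\prod_{i=1}^r p_i^{\alpha_i}$ is the prime factorization of $n$, then $\lambda(n)=\mathrm{lcm}\,(\lambda(p_1^{\alpha_1}),\dots,\lambda(p_r^{\alpha_r}))$, where $\lambda(p^{\alpha})=2^{\alpha-2}$ if $p=2$ and $\alpha\ge 3$, and $\lambda(p^\alpha)=p^{\alpha-1}(p-1)$ otherwise. *)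

theory Defs
  imports "HOL-Number_Theory.Number_Theory"
begin

end

theory Submission
  imports Defs
begin

(* The order m = ord n e divides the Carmichael value of n, so d is an inverse of e
   modulo m.  Any inverse of e modulo m is congruent to e^(k - 1), where k = ord m e,
   because e^k = e * e^(k - 1) is congruent to 1. *)

lemma ord_pos_if_cong_mult_eq_1:
  fixes d e m :: nat
  assumes "[d * e = 1] (mod m)"
  shows "ord m e > 0"
proof -
  have "coprime (d * e) m"
    using assms cong_imp_coprime[of 1 "d * e" m] by (simp add: cong_sym)
  then show ?thesis
    by (simp add: coprime_commute)
qed

lemma cong_inverse_eq_pow_ord_minus_1:
  fixes d e m :: nat
  assumes inverse: "[d * e = 1] (mod m)"
  shows "[d = e ^ (ord m e - 1)] (mod m)"
proof -
  define k where "k = ord m e"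
  have "k > 0"
    unfolding k_def using inverse by (rule ord_pos_if_cong_mult_eq_1)
  then have "e ^ k = e * e ^ (k - 1)"
    by (cases k) auto
  then have "[e * e ^ (k - 1) = 1] (mod m)"
    using ord[of e m] unfolding k_def by simp
  then have "[d = d * (e * e ^ (k - 1))] (mod m)"
    using cong_scalar_left[of _ 1 m d] by (simp add: cong_sym)
  also have "d * (e * e ^ (k - 1)) = (d * e) * e ^ (k - 1)"
    by simp
  also have "[\<dots> = 1 * e ^ (k - 1)] (mod m)"
    using inverse by (rule cong_scalar_right)
  finally show ?thesis
    unfolding k_def by simp
qed

theorem mainTheorem2:
  fixes d e n :: nat
  assumes "d > 0" and "e > 0" and "n > 1"
    and "coprime e n"
    and "[d * e = 1] (mod Carmichael n)"
  shows "ord (ord n e) e > 0 \<and> [d = e ^ (ord (ord n e) e - 1)] (mod ord n e)"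
proof -
  have "ord n e dvd Carmichael n"
    using assms(3,4) by (intro ord_dvd_Carmichael) (auto simp: coprime_commute)
  then have "[d * e = 1] (mod ord n e)"
    using assms(5) by (rule cong_dvd_modulus_nat[rotated])
  then show ?thesis
    using ord_pos_if_cong_mult_eq_1 cong_inverse_eq_pow_ord_minus_1 by blast
qed

end
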